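(* Let $\mathcal H$ be a Hilbert space with $\dim\mathcal H<\infty$ and $T:\mathcal B_*(\mathcal H)\to\mathcal B_*(\mathcal H)$ a channel. Then $$\|T-\mathrm{id}\|\le 4\sup_{\psi\in\mathcal H,\ \|\psi\|=1}\sqrt{1-\langle\psi|T(|\psi\rangle\langle\psi|)|\psi\rangle}.$$
   Context: For a Hilbert space $\mathcal H$, $\mathcal B_*(\mathcal H)$ denotes the trace-class operators on $\mathcal H$ with the trace norm $\|A\|_1=\operatorname{tr}\sqrt{A^*A}$. A channel is a completely positive trace-preserving linear map (Schrödinger picture). For a linear map $X:\mathcal B_*(\mathcal H)\to\mathcal B_*(\mathcal H)$, $\|X\|=\sup_{\|\rho\|_1\le1}\|X(\rho)\|_1$; $\mathrm{id}$ is the identity map. *)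

theory Defs
  imports "HOL-Analysis.Analysis"
begin

text \<open>Finite-dimensional Hilbert space H = complex^'n (dimension CARD('n), arbitrary
  finite type). Operators on H (all of which are trace class) are complex^'n^'n.\<close>

definition cinner_vec :: "complex^'n \<Rightarrow> complex^'n \<Rightarrow> complex" where
  "cinner_vec u v = (\<Sum>i\<in>UNIV. cnj (u$i) * v$i)"

definition adj_mat :: "complex^'n^'n \<Rightarrow> complex^'n^'n" where
  "adj_mat A = (\<chi> i j. cnj (A$j$i))"

definition psd_mat :: "complex^'n^'n \<Rightarrow> bool" where
  "psd_mat A \<longleftrightarrow> (\<forall>v. Im (cinner_vec v (A *v v)) = 0 \<and> 0 \<le> Re (cinner_vec v (A *v v)))"

definition psd_sqrt :: "complex^'n^'n \<Rightarrow> complex^'n^'n" where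
  "psd_sqrt A = (THE B. psd_mat B \<and> B ** B = A)"

definition trace_norm :: "complex^'n^'n \<Rightarrow> real" where
  "trace_norm A = Re (trace (psd_sqrt (adj_mat A ** A)))"

definition cscale_mat :: "complex \<Rightarrow> complex^'n^'n \<Rightarrow> complex^'n^'n" where
  "cscale_mat c A = (\<chi> i j. c * A$i$j)"

definition clinear_map :: "(complex^'n^'n \<Rightarrow> complex^'n^'n) \<Rightarrow> bool" where
  "clinear_map T \<longleftrightarrow> (\<forall>A B. T (A + B) = T A + T B) \<and> (\<forall>c A. T (cscale_mat c A) = cscale_mat c (T A))"

text \<open>A block operator on H \<otimes> C^k, given by its blocks A i j (i, j < k), is positive
  semidefinite iff its quadratic form is real and nonnegative on all vectors
  (v_0, ..., v_{k-1}) in H^k.\<close>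
definition psd_block :: "nat \<Rightarrow> (nat \<Rightarrow> nat \<Rightarrow> complex^'n^'n) \<Rightarrow> bool" where
  "psd_block k A \<longleftrightarrow> (\<forall>v :: nat \<Rightarrow> complex^'n.
     Im (\<Sum>i<k. \<Sum>j<k. cinner_vec (v i) (A i j *v v j)) = 0 \<and>
     0 \<le> Re (\<Sum>i<k. \<Sum>j<k. cinner_vec (v i) (A i j *v v j)))"

text \<open>complete positivity: T \<otimes> id_k is positive for every k\<close>
definition completely_positive :: "(complex^'n^'n \<Rightarrow> complex^'n^'n) \<Rightarrow> bool" where
  "completely_positive T \<longleftrightarrow> (\<forall>k A. psd_block k A \<longrightarrow> psd_block k (\<lambda>i j. T (A i j)))"

definition channel :: "(complex^'n^'n \<Rightarrow> complex^'n^'n) \<Rightarrow> bool" where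
  "channel T \<longleftrightarrow> clinear_map T \<and> completely_positive T \<and> (\<forall>A. trace (T A) = trace A)"

definition superop_norm :: "(complex^'n^'n \<Rightarrow> complex^'n^'n) \<Rightarrow> real" where
  "superop_norm X = Sup {trace_norm (X \<rho>) | \<rho>. trace_norm \<rho> \<le> 1}"

definition ket_bra :: "complex^'n \<Rightarrow> complex^'n^'n" where
  "ket_bra \<psi> = (\<chi> i j. \<psi>$i * cnj (\<psi>$j))"

end

theory Submission
  imports Defs
begin

text \<open>
  The trace norm of \<open>Z\<close> is attained by a linear functional: if \<open>Z e\<^sub>j = \<sigma>\<^sub>j f\<^sub>j\<close> is a
  singular value decomposition, then \<open>\<parallel>Z\<parallel>\<^sub>1 = Re (\<Sum>\<^sub>j \<langle>f\<^sub>j, Z e\<^sub>j\<rangle>)\<close>, and the same pairing is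
  bounded by \<open>\<parallel>x\<parallel> \<parallel>y\<parallel>\<close> on every rank-one operator \<open>|x\<rangle>\<langle>y|\<close>. Take \<open>Z = T \<rho> - \<rho>\<close> and
  \<open>L Y = \<Sum>\<^sub>j \<langle>f\<^sub>j, (T Y - Y) e\<^sub>j\<rangle>\<close>. For a unit vector \<open>p\<close>, diagonalise the density matrix
  \<open>T |p\<rangle>\<langle>p| = \<Sum>\<^sub>l \<mu>\<^sub>l |g\<^sub>l\<rangle>\<langle>g\<^sub>l|\<close>; each \<open>|g\<^sub>l\<rangle>\<langle>g\<^sub>l| - |p\<rangle>\<langle>p|\<close> contributes at most
  \<open>2 sqrt (1 - \<bar>\<langle>g\<^sub>l, p\<rangle>\<bar>\<^sup>2)\<close>, so by concavity of the square root
  \<open>\<bar>L |p\<rangle>\<langle>p|\<bar> \<le> 2 sqrt (1 - \<langle>p, T |p\<rangle>\<langle>p| p\<rangle>) \<le> 2 R\<close>, with \<open>R\<close> the supremum in the statement.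
  Finally \<open>\<rho> = \<Sum>\<^sub>j s\<^sub>j |b\<^sub>j\<rangle>\<langle>a\<^sub>j|\<close> with \<open>\<Sum>\<^sub>j s\<^sub>j = \<parallel>\<rho>\<parallel>\<^sub>1\<close>, \<open>\<parallel>a\<^sub>j\<parallel> = 1\<close>, \<open>\<parallel>b\<^sub>j\<parallel> \<le> 1\<close>, and polarization
  writes each \<open>|b\<rangle>\<langle>a|\<close> as a combination of four projections of total weight
  \<open>\<parallel>a\<parallel>\<^sup>2 + \<parallel>b\<parallel>\<^sup>2 \<le> 2\<close>, whence \<open>\<bar>L \<rho>\<bar> \<le> 4 R \<parallel>\<rho>\<parallel>\<^sub>1\<close>.
\<close>

section \<open>Inner product and rank-one operators\<close>

notation cinner_vec (\<open>\<langle>_, _\<rangle>\<close>)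

lemma cinner_vec_add_left: "\<langle>x + y, z\<rangle> = \<langle>x, z\<rangle> + \<langle>y, z\<rangle>"
  and cinner_vec_add_right: "\<langle>x, y + z\<rangle> = \<langle>x, y\<rangle> + \<langle>x, z\<rangle>"
  and cinner_vec_diff_left: "\<langle>x - y, z\<rangle> = \<langle>x, z\<rangle> - \<langle>y, z\<rangle>"
  and cinner_vec_diff_right: "\<langle>x, y - z\<rangle> = \<langle>x, y\<rangle> - \<langle>x, z\<rangle>"
  and cinner_vec_scale_left: "\<langle>c *s x, z\<rangle> = cnj c * \<langle>x, z\<rangle>"
  and cinner_vec_scale_right: "\<langle>x, c *s z\<rangle> = c * \<langle>x, z\<rangle>"
  by (simp_all add: cinner_vec_def sum.distrib sum_subtractf sum_distrib_left algebra_simps)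

lemma complex_mult_cnj_eq_cmod_sq: "z * cnj z = of_real (cmod z) ^ 2"
  and complex_cnj_mult_eq_cmod_sq: "cnj z * z = of_real (cmod z) ^ 2"
  by (simp_all add: mult.commute[of "cnj z"] flip: complex_norm_square)

lemma scaleR_eq_of_real_scale: "r *\<^sub>R (x::complex^'n) = of_real r *s x"
  by (simp add: vec_eq_iff complex_eq_iff)

lemma cinner_vec_scaleR_left: "\<langle>r *\<^sub>R x, z\<rangle> = of_real r * \<langle>x, z\<rangle>"
  and cinner_vec_scaleR_right: "\<langle>x, r *\<^sub>R z\<rangle> = of_real r * \<langle>x, z\<rangle>"
  by (simp_all add: scaleR_eq_of_real_scale cinner_vec_scale_left cinner_vec_scale_right)

lemma cinner_vec_zero_left [simp]: "\<langle>0, z\<rangle> = 0"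
  and cinner_vec_zero_right [simp]: "\<langle>z, 0\<rangle> = 0"
  by (simp_all add: cinner_vec_def)

lemma cinner_vec_sum_left: "\<langle>\<Sum>j\<in>J. f j, z\<rangle> = (\<Sum>j\<in>J. \<langle>f j, z\<rangle>)"
  by (induct J rule: infinite_finite_induct) (auto simp: cinner_vec_add_left)

lemma cinner_vec_sum_right: "\<langle>z, \<Sum>j\<in>J. f j\<rangle> = (\<Sum>j\<in>J. \<langle>z, f j\<rangle>)"
  by (induct J rule: infinite_finite_induct) (auto simp: cinner_vec_add_right)

lemma cinner_vec_minus_right: "\<langle>x, - y\<rangle> = - \<langle>x, y\<rangle>"
  by (simp add: cinner_vec_def sum_negf)

lemmas cinner_vec_linear = cinner_vec_minus_right cinner_vec_add_left cinner_vec_add_right cinner_vec_diff_left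
  cinner_vec_diff_right cinner_vec_scale_left cinner_vec_scale_right cinner_vec_scaleR_left
  cinner_vec_scaleR_right cinner_vec_sum_left cinner_vec_sum_right

lemma cinner_vec_commute: "\<langle>x, y\<rangle> = cnj \<langle>y, x\<rangle>"
  by (simp add: cinner_vec_def mult.commute)

lemma cinner_vec_self: "\<langle>x, x\<rangle> = of_real (norm x ^ 2)"
proof -
  have "\<langle>x, x\<rangle> = (\<Sum>i\<in>UNIV. of_real (norm (x$i) ^ 2))"
    unfolding cinner_vec_def
    by (intro sum.cong refl) (metis complex_norm_square mult.commute of_real_power)
  also have "\<dots> = of_real (norm x ^ 2)"
    by (simp add: norm_vec_def L2_set_def sum_nonneg)
  finally show ?thesis .
qed

lemma Re_cinner_vec_self [simp]: "Re \<langle>x, x\<rangle> = norm x ^ 2"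
  by (simp add: cinner_vec_self)

lemma cinner_vec_self_eq_0_iff [simp]: "\<langle>x, x\<rangle> = 0 \<longleftrightarrow> x = 0"
  by (simp add: cinner_vec_self)

lemma cinner_vec_self_eq_1_iff: "\<langle>x, x\<rangle> = 1 \<longleftrightarrow> norm x = 1"
proof -
  have "\<langle>x, x\<rangle> = 1 \<longleftrightarrow> norm x ^ 2 = 1"
    by (metis cinner_vec_self of_real_eq_1_iff)
  then show ?thesis
    by (simp add: power2_eq_1_iff) (metis norm_ge_zero neg_0_le_iff_le not_one_le_zero)
qed

lemma inner_vec_eq_Re_cinner_vec: "inner u v = Re \<langle>u, v\<rangle>"
  by (simp add: inner_vec_def cinner_vec_def inner_complex_def Re_sum)

lemma norm_scale_vec: "norm (c *s x) = cmod c * norm (x::complex^'n)"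
  by (simp add: norm_vec_def norm_mult L2_set_right_distrib)

lemma unimodular_phase:
  obtains c :: complex where "cmod c = 1" "cnj c * z = of_real (cmod z)"
proof (cases "z = 0")
  case True
  then show ?thesis by (intro that[of 1]) auto
next
  case False
  have "cnj (sgn z) * z = (z * cnj z) / of_real (cmod z)"
    by (simp add: sgn_eq mult.commute)
  also have "\<dots> = of_real (cmod z)"
    using False by (simp flip: complex_norm_square add: power2_eq_square)
  finally have "cnj (sgn z) * z = of_real (cmod z)" .
  moreover have "cmod (sgn z) = 1"
    using False by (simp add: norm_sgn)
  ultimately show ?thesis
    using that by blast
qed

lemma cmod_cinner_vec_le: "cmod \<langle>x, y\<rangle> \<le> norm x * norm y"
proof -
  obtain c where c: "cmod c = 1" "cnj c * \<langle>x, y\<rangle> = of_real (cmod \<langle>x, y\<rangle>)"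
    using unimodular_phase .
  have "cmod \<langle>x, y\<rangle> = inner (c *s x) y"
    using c(2) by (simp add: inner_vec_eq_Re_cinner_vec cinner_vec_scale_left)
  also have "\<dots> \<le> norm (c *s x) * norm y"
    by (rule norm_cauchy_schwarz)
  finally show ?thesis
    using c(1) by (simp add: norm_scale_vec)
qed

lemma matrix_vector_mult_sum_right: "A *v (\<Sum>j\<in>J. f j) = (\<Sum>j\<in>J. A *v (f j::complex^'n))"
  by (induct J rule: infinite_finite_induct) (auto simp: matrix_vector_right_distrib)

lemma matrix_vector_mult_sum_left: "(\<Sum>j\<in>J. M j) *v (x::complex^'n) = (\<Sum>j\<in>J. M j *v x)"
  by (induct J rule: infinite_finite_induct) (auto simp: matrix_vector_mult_add_rdistrib)

lemma matrix_vector_mult_scaleR_complex: "A *v (r *\<^sub>R x) = r *\<^sub>R (A *v (x::complex^'n))"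
  by (simp add: scaleR_eq_of_real_scale vector_scalar_commute)

lemma cinner_vec_adj_mat: "\<langle>u, adj_mat A *v w\<rangle> = \<langle>A *v u, w\<rangle>"
proof -
  have "\<langle>u, adj_mat A *v w\<rangle> = (\<Sum>a\<in>UNIV. \<Sum>b\<in>UNIV. cnj (u$a) * cnj (A$b$a) * w$b)"
    by (simp add: cinner_vec_def adj_mat_def matrix_vector_mult_def sum_distrib_left mult.assoc)
  also have "\<dots> = (\<Sum>b\<in>UNIV. \<Sum>a\<in>UNIV. cnj (u$a) * cnj (A$b$a) * w$b)"
    by (rule sum.swap)
  also have "\<dots> = \<langle>A *v u, w\<rangle>"
    by (simp add: cinner_vec_def matrix_vector_mult_def sum_distrib_right sum_distrib_left mult_ac)
  finally show ?thesis .
qed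

lemma cscale_mat_mult_vec: "cscale_mat c A *v x = c *s (A *v (x::complex^'n))"
  by (simp add: cscale_mat_def vec_eq_iff matrix_vector_mult_def sum_distrib_left mult.assoc)

lemma trace_cscale_mat: "trace (cscale_mat c A) = c * trace (A::complex^'n^'n)"
  by (simp add: trace_def cscale_mat_def sum_distrib_left)

lemma trace_sum: "trace (\<Sum>j\<in>J. M j) = (\<Sum>j\<in>J. trace (M j :: complex^'n^'n))"
  unfolding trace_def by (simp add: sum_component) (rule sum.swap)

definition outer_prod :: "complex^'n \<Rightarrow> complex^'n \<Rightarrow> complex^'n^'n" where
  "outer_prod u v = (\<chi> a b. u$a * cnj (v$b))"

lemma outer_prod_mult_vec: "outer_prod u v *v x = \<langle>v, x\<rangle> *s u"
  by (simp add: outer_prod_def vec_eq_iff matrix_vector_mult_def cinner_vec_def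
      sum_distrib_left algebra_simps)

lemma ket_bra_eq_outer_prod: "ket_bra x = outer_prod x x"
  by (simp add: ket_bra_def outer_prod_def)

lemma trace_outer_prod: "trace (outer_prod u v) = \<langle>v, u\<rangle>"
  by (simp add: trace_def outer_prod_def cinner_vec_def mult.commute)

lemma outer_prod_scaleR_left: "outer_prod (r *\<^sub>R u) v = cscale_mat (of_real r) (outer_prod u v)"
  by (simp add: outer_prod_def cscale_mat_def vec_eq_iff scaleR_eq_of_real_scale mult_ac)

lemma ket_bra_scaleR: "ket_bra (r *\<^sub>R w) = cscale_mat (of_real (r^2)) (ket_bra w)"
  by (simp add: ket_bra_def cscale_mat_def vec_eq_iff scaleR_eq_of_real_scale power2_eq_square
      mult_ac)

lemma ket_bra_unimodular_scale:
  assumes "cmod c = 1"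
  shows "ket_bra (c *s w) = ket_bra w"
proof -
  have "c * cnj c = 1"
    using assms by (simp add: complex_mult_cnj_eq_cmod_sq)
  then show ?thesis
    by (simp add: ket_bra_def vec_eq_iff mult_ac)
qed

lemma ket_bra_diff_eq_outer_prod:
  "ket_bra a - ket_bra b =
     cscale_mat (1/2) (outer_prod (a - b) (a + b) + outer_prod (a + b) (a - b))"
  by (simp add: ket_bra_def outer_prod_def cscale_mat_def vec_eq_iff algebra_simps)

lemma outer_prod_polarization:
  "outer_prod b a = (\<Sum>m<4. cscale_mat (\<i>^m / 4) (ket_bra (b + \<i>^m *s a)))"
proof -
  have "{..<4::nat} = {0,1,2,3}" by auto
  then show ?thesis
    by (simp add: vec_eq_iff outer_prod_def ket_bra_def cscale_mat_def field_simps
        power3_eq_cube power2_eq_square)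
qed

section \<open>Hermitian and positive semidefinite matrices\<close>

definition hermitian_mat :: "complex^'n^'n \<Rightarrow> bool" where
  "hermitian_mat A \<longleftrightarrow> (\<forall>v. Im \<langle>v, A *v v\<rangle> = 0)"

lemma hermitian_mat_cinner_vec:
  assumes "hermitian_mat A"
  shows "\<langle>x, A *v y\<rangle> = \<langle>A *v x, y\<rangle>"
proof -
  define s where "s u v = \<langle>u, A *v v\<rangle>" for u v
  have real: "Im (s u u) = 0" for u
    using assms unfolding hermitian_mat_def s_def by auto
  have "s (x + y) (x + y) = s x x + s x y + s y x + s y y"
    by (simp add: s_def matrix_vector_right_distrib cinner_vec_linear)
  then have "Im (s x y) + Im (s y x) = 0"
    using real[of "x + y"] real[of x] real[of y] by simp
  moreover have "s (x + \<i> *s y) (x + \<i> *s y) = s x x + \<i> * s x y - \<i> * s y x + s y y"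
    by (simp add: s_def matrix_vector_right_distrib vector_scalar_commute cinner_vec_linear
        algebra_simps)
  then have "Re (s x y) - Re (s y x) = 0"
    using real[of "x + \<i> *s y"] real[of x] real[of y] by simp
  ultimately have "s x y = cnj (s y x)"
    by (simp add: complex_eq_iff)
  then show ?thesis
    by (simp add: s_def cinner_vec_commute[of "A *v x" y])
qed

lemma psd_mat_imp_hermitian_mat: "psd_mat A \<Longrightarrow> hermitian_mat A"
  and psd_mat_Re_nonneg: "psd_mat A \<Longrightarrow> 0 \<le> Re \<langle>x, A *v x\<rangle>"
  by (auto simp: psd_mat_def hermitian_mat_def)

lemma psd_mat_adj_mult: "psd_mat (adj_mat X ** X)"
proof -
  have "\<langle>v, (adj_mat X ** X) *v v\<rangle> = of_real (norm (X *v v)^2)" for v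
    by (simp only: matrix_vector_mul_assoc[symmetric] cinner_vec_adj_mat cinner_vec_self)
  then show ?thesis
    unfolding psd_mat_def by simp
qed

lemma psd_mat_ket_bra: "psd_mat (ket_bra p)"
proof -
  have "\<langle>v, ket_bra p *v v\<rangle> = of_real (cmod \<langle>p, v\<rangle> ^ 2)" for v
    by (simp add: ket_bra_eq_outer_prod outer_prod_mult_vec cinner_vec_scale_right
        cinner_vec_commute[of v p] complex_mult_cnj_eq_cmod_sq)
  then show ?thesis
    unfolding psd_mat_def by simp
qed

lemma completely_positive_psd_mat:
  assumes "completely_positive T" "psd_mat A"
  shows "psd_mat (T A)"
proof -
  have sum1: "(\<Sum>i<1. f i) = f 0" for f :: "nat \<Rightarrow> complex"
    by simp
  have "psd_block 1 (\<lambda>i j. A)"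
    using assms(2) unfolding psd_block_def psd_mat_def sum1 by simp
  then have "psd_block 1 (\<lambda>i j. T A)"
    using assms(1) unfolding completely_positive_def by blast
  then have "Im \<langle>v, T A *v v\<rangle> = 0 \<and> 0 \<le> Re \<langle>v, T A *v v\<rangle>" for v
    unfolding psd_block_def sum1 by (rule allE[of _ "\<lambda>_. v"])
  then show ?thesis
    unfolding psd_mat_def by blast
qed

section \<open>Orthonormal families\<close>

definition orthonormal_family :: "nat \<Rightarrow> (nat \<Rightarrow> complex^'n) \<Rightarrow> bool" where
  "orthonormal_family k e \<longleftrightarrow> (\<forall>i<k. \<forall>j<k. \<langle>e i, e j\<rangle> = (if i = j then 1 else 0))"

abbreviation orthonormal_basis :: "(nat \<Rightarrow> complex^'n) \<Rightarrow> bool" where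
  "orthonormal_basis e \<equiv> orthonormal_family CARD('n) e"

definition orthonormal_or_zero :: "nat \<Rightarrow> (nat \<Rightarrow> complex^'n) \<Rightarrow> bool" where
  "orthonormal_or_zero k f \<longleftrightarrow>
     (\<forall>i<k. \<forall>j<k. i \<noteq> j \<longrightarrow> \<langle>f i, f j\<rangle> = 0) \<and> (\<forall>j<k. f j = 0 \<or> norm (f j) = 1)"

lemma orthonormal_familyD:
  "orthonormal_family k e \<Longrightarrow> i < k \<Longrightarrow> j < k \<Longrightarrow> \<langle>e i, e j\<rangle> = (if i = j then 1 else 0)"
  by (simp add: orthonormal_family_def)

lemma orthonormal_family_norm: "orthonormal_family k e \<Longrightarrow> j < k \<Longrightarrow> norm (e j) = 1"
  using orthonormal_familyD[of k e j j] by (simp add: cinner_vec_self_eq_1_iff)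

lemma orthonormal_family_extend:
  assumes "orthonormal_family k e" "norm u = 1" "\<And>j. j < k \<Longrightarrow> \<langle>e j, u\<rangle> = 0"
  shows "orthonormal_family (Suc k) (e(k := u))"
proof -
  have "\<langle>u, e j\<rangle> = 0" if "j < k" for j
    using assms(3)[OF that] cinner_vec_commute[of u "e j"] by simp
  then show ?thesis
    using assms by (auto simp: orthonormal_family_def less_Suc_eq cinner_vec_self_eq_1_iff)
qed

lemma orthonormal_family_card_le:
  fixes e :: "nat \<Rightarrow> complex^'n"
  assumes "orthonormal_family k e"
  shows "k \<le> CARD('n)"
proof -
  txt \<open>The vectors \<open>e j\<close> and \<open>\<i> *s e j\<close> are orthonormal for the real inner product, in a real
    space of dimension \<open>2 * CARD('n)\<close>.\<close>
  define h where "h j = (if j < k then e j else \<i> *s e (j - k))" for j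
  have h_inner: "inner (h i) (h j) = (if i = j then 1 else 0)" if "i < 2 * k" "j < 2 * k" for i j
    using that orthonormal_familyD[OF assms, of "i - k" "j - k"]
      orthonormal_familyD[OF assms, of i "j - k"] orthonormal_familyD[OF assms, of "i - k" j]
      orthonormal_familyD[OF assms, of i j]
    by (auto simp: h_def inner_vec_eq_Re_cinner_vec cinner_vec_scale_left cinner_vec_scale_right
        orthonormal_family_norm[OF assms])
  have "inj_on h {..<2 * k}"
    by (rule inj_onI) (metis h_inner lessThan_iff zero_neq_one)
  moreover have "independent (h ` {..<2 * k})"
  proof (rule pairwise_orthogonal_independent)
    show "pairwise orthogonal (h ` {..<2 * k})"
      by (auto simp: pairwise_def orthogonal_def h_inner)
    show "0 \<notin> h ` {..<2 * k}"
      using h_inner by force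
  qed
  ultimately have "card {..<2 * k} \<le> DIM(complex^'n)"
    using independent_bound card_image by metis
  then show ?thesis
    by simp
qed

lemma cinner_vec_eq_0_iff_inner: "\<langle>u, x\<rangle> = 0 \<longleftrightarrow> inner u x = 0 \<and> inner (\<i> *s u) x = 0"
  by (simp add: complex_eq_iff inner_vec_eq_Re_cinner_vec cinner_vec_scale_left)

lemma exists_nonzero_orthogonal:
  fixes e :: "nat \<Rightarrow> complex^'n"
  assumes "k < CARD('n)"
  obtains x where "x \<noteq> 0" "\<And>j. j < k \<Longrightarrow> \<langle>e j, x\<rangle> = 0"
proof -
  define S where "S = e ` {..<k} \<union> (\<lambda>j. \<i> *s e j) ` {..<k}"
  have "card S \<le> 2 * k"
    unfolding S_def using card_Un_le card_image_le
    by (metis (no_types, lifting) finite_lessThan card_lessThan add_mono mult_2 order_trans)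
  then have "dim S < DIM(complex^'n)"
    using dim_le_card'[of S] assms by (simp add: S_def)
  then obtain x where "x \<noteq> 0" and x_orth: "\<And>y. y \<in> span S \<Longrightarrow> orthogonal x y"
    using orthogonal_to_subspace_exists by blast
  have "inner y x = 0" if "y \<in> S" for y
    using x_orth[OF span_base[OF that]] by (simp add: orthogonal_def inner_commute)
  then have "\<langle>e j, x\<rangle> = 0" if "j < k" for j
    using that by (simp add: S_def cinner_vec_eq_0_iff_inner)
  with \<open>x \<noteq> 0\<close> show ?thesis
    using that by blast
qed

lemma orthonormal_basis_expansion:
  fixes e :: "nat \<Rightarrow> complex^'n"
  assumes e: "orthonormal_basis e"
  shows "x = (\<Sum>j<CARD('n). \<langle>e j, x\<rangle> *s e j)"
proof (rule ccontr)
  let ?N = "CARD('n)"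
  define y where "y = x - (\<Sum>j<?N. \<langle>e j, x\<rangle> *s e j)"
  assume "x \<noteq> (\<Sum>j<?N. \<langle>e j, x\<rangle> *s e j)"
  then have "y \<noteq> 0"
    by (simp add: y_def)
  have y_orth: "\<langle>e i, y\<rangle> = 0" if "i < ?N" for i
  proof -
    have "(\<Sum>j<?N. \<langle>e j, x\<rangle> * \<langle>e i, e j\<rangle>) = (\<Sum>j<?N. if j = i then \<langle>e j, x\<rangle> else 0)"
      using orthonormal_familyD[OF e that] by (intro sum.cong) auto
    then show ?thesis
      using that by (simp add: y_def cinner_vec_linear)
  qed
  have "orthonormal_family (Suc ?N) (e(?N := (1 / norm y) *\<^sub>R y))"
    using \<open>y \<noteq> 0\<close> y_orth by (intro orthonormal_family_extend[OF e]) (simp_all add: cinner_vec_linear)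
  then have "Suc ?N \<le> ?N"
    by (rule orthonormal_family_card_le)
  then show False
    by simp
qed

lemma orthonormal_basis_parseval:
  fixes e :: "nat \<Rightarrow> complex^'n"
  assumes e: "orthonormal_basis e"
  shows "norm (x::complex^'n) ^ 2 = (\<Sum>j<CARD('n). cmod \<langle>e j, x\<rangle> ^ 2)"
proof -
  have "\<langle>x, x\<rangle> = \<langle>\<Sum>j<CARD('n). \<langle>e j, x\<rangle> *s e j, x\<rangle>"
    by (rule arg_cong[OF orthonormal_basis_expansion[OF e, of x]])
  also have "\<dots> = of_real (\<Sum>j<CARD('n). cmod \<langle>e j, x\<rangle> ^ 2)"
    by (simp add: cinner_vec_linear complex_cnj_mult_eq_cmod_sq)
  finally show ?thesis
    by (simp only: cinner_vec_self of_real_eq_iff)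
qed

lemma matrix_eq_sum_outer_prod:
  fixes e :: "nat \<Rightarrow> complex^'n"
  assumes e: "orthonormal_basis e"
  shows "(M::complex^'n^'n) = (\<Sum>j<CARD('n). outer_prod (M *v e j) (e j))"
proof (subst matrix_eq, intro allI)
  fix x
  have "M *v x = M *v (\<Sum>j<CARD('n). \<langle>e j, x\<rangle> *s e j)"
    by (subst orthonormal_basis_expansion[OF e]) (rule refl)
  then show "M *v x = (\<Sum>j<CARD('n). outer_prod (M *v e j) (e j)) *v x"
    by (simp add: matrix_vector_mult_sum_right matrix_vector_mult_sum_left vector_scalar_commute
        outer_prod_mult_vec)
qed

lemma bessel_inequality:
  assumes f: "orthonormal_or_zero k f"
  shows "(\<Sum>j<k. cmod \<langle>f j, x\<rangle> ^ 2) \<le> norm x ^ 2"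
proof -
  define s where "s = (\<Sum>j<k. cmod \<langle>f j, x\<rangle> ^ 2)"
  define p where "p = (\<Sum>j<k. \<langle>f j, x\<rangle> *s f j)"
  have "\<langle>f j, p\<rangle> = \<langle>f j, x\<rangle>" if "j < k" for j
  proof -
    have "\<langle>f j, p\<rangle> = (\<Sum>l<k. if l = j then \<langle>f j, x\<rangle> * \<langle>f j, f j\<rangle> else 0)"
      unfolding p_def cinner_vec_linear using f that
      by (intro sum.cong) (auto simp: orthonormal_or_zero_def)
    also have "\<dots> = \<langle>f j, x\<rangle>"
      using f that by (auto simp: orthonormal_or_zero_def cinner_vec_self_eq_1_iff)
    finally show ?thesis .
  qed
  then have pp: "\<langle>p, p\<rangle> = of_real s"
    by (subst (1) p_def) (simp add: s_def cinner_vec_linear complex_cnj_mult_eq_cmod_sq)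
  have px: "\<langle>p, x\<rangle> = of_real s"
    by (simp add: p_def s_def cinner_vec_linear complex_cnj_mult_eq_cmod_sq)
  have "0 \<le> Re \<langle>x - p, x - p\<rangle>"
    by simp
  also have "\<dots> = norm x ^ 2 - s"
    using cinner_vec_commute[of x p] by (simp add: cinner_vec_linear pp px)
  finally show ?thesis
    by (simp add: s_def)
qed

section \<open>Spectral theorem\<close>

lemma linear_coeff_eq_0_if_quadratic_nonpos:
  fixes a b :: real
  assumes "\<And>t. a * t + b * t^2 \<le> 0"
  shows "a = 0"
proof (rule ccontr)
  assume "a \<noteq> 0"
  define s where "s = 1 / (\<bar>b\<bar> + 1)"
  have "s > 0" and "\<bar>b * s\<bar> < 1"
    by (simp_all add: s_def abs_mult field_simps)
  have "a * (a * s) + b * (a * s)^2 = a^2 * s * (1 + b * s)"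
    by (simp add: power2_eq_square algebra_simps)
  also have "\<dots> > 0"
    using \<open>a \<noteq> 0\<close> \<open>s > 0\<close> \<open>\<bar>b * s\<bar> < 1\<close> by (intro mult_pos_pos) (auto simp: abs_less_iff)
  finally show False
    using assms by (metis not_le)
qed

lemma hermitian_max_quadratic_form_first_order:
  fixes A :: "complex^'n^'n"
  assumes A: "hermitian_mat A"
    and V_add: "\<And>x y. x \<in> V \<Longrightarrow> y \<in> V \<Longrightarrow> x + y \<in> V"
    and V_scale: "\<And>c x. x \<in> V \<Longrightarrow> c *s x \<in> V"
    and u: "u \<in> V" "norm u = 1"
    and max: "\<And>y. y \<in> V \<Longrightarrow> norm y = 1 \<Longrightarrow> Re \<langle>y, A *v y\<rangle> \<le> Re \<langle>u, A *v u\<rangle>"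
    and y: "y \<in> V"
  shows "Re \<langle>y, A *v u - Re \<langle>u, A *v u\<rangle> *\<^sub>R u\<rangle> = 0"
proof -
  define q where "q v = Re \<langle>v, A *v v\<rangle>" for v
  define M where "M = q u"
  have V_scaleR: "r *\<^sub>R x \<in> V" if "x \<in> V" for r x
    using V_scale[OF that] by (simp add: scaleR_eq_of_real_scale)
  have bound: "q w \<le> M * norm w ^ 2" if "w \<in> V" for w
  proof (cases "w = 0")
    case True
    then show ?thesis by (simp add: q_def)
  next
    case False
    have "q ((1 / norm w) *\<^sub>R w) \<le> M"
      using max V_scaleR[OF that] False by (simp add: q_def M_def)
    moreover have "q ((1 / norm w) *\<^sub>R w) = q w / norm w ^ 2"
      by (simp add: q_def matrix_vector_mult_scaleR_complex cinner_vec_linear power2_eq_square)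
    ultimately show ?thesis
      using False by (simp add: field_simps)
  qed
  define a where "a = 2 * (Re \<langle>y, A *v u\<rangle> - M * Re \<langle>y, u\<rangle>)"
  define b where "b = q y - M * norm y ^ 2"
  have Re_sym: "Re \<langle>u, A *v y\<rangle> = Re \<langle>y, A *v u\<rangle>" "Re \<langle>u, y\<rangle> = Re \<langle>y, u\<rangle>"
    using hermitian_mat_cinner_vec[OF A, of u y] cinner_vec_commute[of "A *v u" y]
      cinner_vec_commute[of u y] by simp_all
  have "a * t + b * t^2 \<le> 0" for t
  proof -
    have "q (u + t *\<^sub>R y) \<le> M * norm (u + t *\<^sub>R y) ^ 2"
      using bound V_add[OF u(1) V_scaleR[OF y]] by blast
    moreover have "norm (u + t *\<^sub>R y) ^ 2 = Re \<langle>u + t *\<^sub>R y, u + t *\<^sub>R y\<rangle>"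
      by simp
    ultimately show ?thesis
      using u(2) Re_sym
      by (simp add: a_def b_def M_def q_def matrix_vector_right_distrib
          matrix_vector_mult_scaleR_complex cinner_vec_linear power2_eq_square algebra_simps)
  qed
  then have "a = 0"
    by (rule linear_coeff_eq_0_if_quadratic_nonpos)
  then show ?thesis
    by (simp add: a_def M_def q_def cinner_vec_linear)
qed

lemma hermitian_max_quadratic_form_eigenvector:
  fixes A :: "complex^'n^'n"
  assumes A: "hermitian_mat A"
    and V_add: "\<And>x y. x \<in> V \<Longrightarrow> y \<in> V \<Longrightarrow> x + y \<in> V"
    and V_scale: "\<And>c x. x \<in> V \<Longrightarrow> c *s x \<in> V"
    and V_inv: "\<And>v. v \<in> V \<Longrightarrow> A *v v \<in> V"
    and u: "u \<in> V" "norm u = 1"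
    and max: "\<And>y. y \<in> V \<Longrightarrow> norm y = 1 \<Longrightarrow> Re \<langle>y, A *v y\<rangle> \<le> Re \<langle>u, A *v u\<rangle>"
  shows "A *v u = Re \<langle>u, A *v u\<rangle> *\<^sub>R u"
proof -
  define w where "w = A *v u - Re \<langle>u, A *v u\<rangle> *\<^sub>R u"
  have first_order: "Re \<langle>y, w\<rangle> = 0" if "y \<in> V" for y
    unfolding w_def using u max V_add V_scale that
    by (intro hermitian_max_quadratic_form_first_order[OF A]) simp_all
  have "w \<in> V"
    using V_add[OF V_inv[OF u(1)] V_scale[OF u(1), of "- of_real (Re \<langle>u, A *v u\<rangle>)"]]
    by (simp add: w_def scaleR_eq_of_real_scale vector_smult_lneg)
  moreover have "\<langle>y, w\<rangle> = 0" if "y \<in> V" for y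
    using first_order[OF that] first_order[OF V_scale[OF that, of \<i>]]
    by (simp add: complex_eq_iff cinner_vec_scale_left)
  ultimately have "w = 0"
    by (metis cinner_vec_self_eq_0_iff)
  then show ?thesis
    by (simp add: w_def)
qed

lemma exists_max_quadratic_form_orthogonal:
  fixes e :: "nat \<Rightarrow> complex^'n"
  assumes "k < CARD('n)"
  obtains u where "norm u = 1" "\<forall>j<k. \<langle>e j, u\<rangle> = 0"
    "\<And>y. norm y = 1 \<Longrightarrow> \<forall>j<k. \<langle>e j, y\<rangle> = 0 \<Longrightarrow> Re \<langle>y, A *v y\<rangle> \<le> Re \<langle>u, A *v u\<rangle>"
proof -
  define K where "K = sphere 0 1 \<inter> (\<Inter>j<k. {v. \<langle>e j, v\<rangle> = 0})"
  have "closed {v. \<langle>e j, v\<rangle> = 0}" for j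
    unfolding cinner_vec_def by (intro closed_Collect_eq continuous_intros)
  then have "compact K"
    unfolding K_def by (intro compact_Int_closed compact_sphere closed_INT) auto
  moreover have "K \<noteq> {}"
  proof -
    obtain x where "x \<noteq> 0" "\<And>j. j < k \<Longrightarrow> \<langle>e j, x\<rangle> = 0"
      using exists_nonzero_orthogonal assms by metis
    then have "(1 / norm x) *\<^sub>R x \<in> K"
      by (simp add: K_def cinner_vec_linear)
    then show ?thesis
      by auto
  qed
  moreover have "continuous_on K (\<lambda>v. Re \<langle>v, A *v v\<rangle>)"
    unfolding cinner_vec_def matrix_vector_mult_def by (intro continuous_intros)
  ultimately obtain u where "u \<in> K" "\<And>y. y \<in> K \<Longrightarrow> Re \<langle>y, A *v y\<rangle> \<le> Re \<langle>u, A *v u\<rangle>"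
    by (blast dest: continuous_attains_sup)
  then show ?thesis
    using that by (auto simp: K_def)
qed

lemma hermitian_spectral_family:
  fixes A :: "complex^'n^'n"
  assumes A: "hermitian_mat A" and "k \<le> CARD('n)"
  shows "\<exists>e lam. orthonormal_family k e \<and> (\<forall>j<k. A *v e j = lam j *\<^sub>R e j)"
  using assms(2)
proof (induction k)
  case 0
  then show ?case by (simp add: orthonormal_family_def)
next
  case (Suc k)
  then obtain e lam where e: "orthonormal_family k e" and eig: "\<forall>j<k. A *v e j = lam j *\<^sub>R e j"
    by auto
  define V where "V = {v. \<forall>j<k. \<langle>e j, v\<rangle> = 0}"
  have V_inv: "A *v v \<in> V" if "v \<in> V" for v
  proof -
    have "\<langle>e j, A *v v\<rangle> = 0" if "j < k" for j
    proof -
      have "\<langle>e j, A *v v\<rangle> = \<langle>A *v e j, v\<rangle>"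
        by (rule hermitian_mat_cinner_vec[OF A])
      also have "\<dots> = of_real (lam j) * \<langle>e j, v\<rangle>"
        using eig \<open>j < k\<close> by (simp add: cinner_vec_scaleR_left)
      finally show ?thesis
        using \<open>v \<in> V\<close> \<open>j < k\<close> by (simp add: V_def)
    qed
    then show ?thesis
      by (simp add: V_def)
  qed
  obtain u where u: "norm u = 1" "u \<in> V"
    and u_max: "\<And>y. norm y = 1 \<Longrightarrow> y \<in> V \<Longrightarrow> Re \<langle>y, A *v y\<rangle> \<le> Re \<langle>u, A *v u\<rangle>"
    using exists_max_quadratic_form_orthogonal[of k e A] Suc.prems unfolding V_def by auto
  define mu where "mu = Re \<langle>u, A *v u\<rangle>"
  have u_eig: "A *v u = mu *\<^sub>R u"
    unfolding mu_def using u u_max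
    by (intro hermitian_max_quadratic_form_eigenvector[OF A _ _ V_inv])
      (auto simp: V_def cinner_vec_linear)
  show ?case
  proof (intro exI conjI)
    show "orthonormal_family (Suc k) (e(k := u))"
      using u by (intro orthonormal_family_extend[OF e]) (auto simp: V_def)
    show "\<forall>j<Suc k. A *v (e(k := u)) j = (lam(k := mu)) j *\<^sub>R (e(k := u)) j"
      using eig u_eig by (auto simp: less_Suc_eq)
  qed
qed

lemma hermitian_spectral_theorem:
  fixes A :: "complex^'n^'n"
  assumes "hermitian_mat A"
  obtains e lam where "orthonormal_basis e" "\<And>j. j < CARD('n) \<Longrightarrow> A *v e j = lam j *\<^sub>R e j"
proof -
  obtain e lam where "orthonormal_basis e" "\<forall>j<CARD('n). A *v e j = lam j *\<^sub>R e j"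
    using hermitian_spectral_family[OF assms order.refl] by blast
  then show ?thesis
    using that by blast
qed

lemma psd_spectral_theorem:
  fixes A :: "complex^'n^'n"
  assumes A: "psd_mat A"
  obtains e lam where "orthonormal_basis e" "\<And>j. 0 \<le> lam j"
    "\<And>j. j < CARD('n) \<Longrightarrow> A *v e j = lam j *\<^sub>R e j"
proof -
  obtain e lam where e: "orthonormal_basis e" and eig: "\<And>j. j < CARD('n) \<Longrightarrow> A *v e j = lam j *\<^sub>R e j"
    using hermitian_spectral_theorem[OF psd_mat_imp_hermitian_mat[OF A]] by blast
  have "lam j = Re \<langle>e j, A *v e j\<rangle>" if "j < CARD('n)" for j
    using orthonormal_family_norm[OF e that] eig[OF that] by (simp add: cinner_vec_linear)
  then have "0 \<le> (if j < CARD('n) then lam j else 0)" for j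
    using psd_mat_Re_nonneg[OF A] by simp
  with e eig show ?thesis
    by (intro that[of e "\<lambda>j. if j < CARD('n) then lam j else 0"]) auto
qed

section \<open>Square root and trace norm\<close>

lemma orthonormal_basis_matrix_eqI:
  fixes A B :: "complex^'n^'n"
  assumes e: "orthonormal_basis e" and eq: "\<And>j. j < CARD('n) \<Longrightarrow> A *v e j = B *v e j"
  shows "A = B"
  using matrix_eq_sum_outer_prod[OF e, of A] matrix_eq_sum_outer_prod[OF e, of B] eq by simp

lemma sum_ket_bra_mult_basis:
  assumes e: "orthonormal_family k e" and "i < k"
  shows "(\<Sum>j<k. cscale_mat (of_real (c j)) (ket_bra (e j))) *v e i = c i *\<^sub>R e i"
proof -
  have "(\<Sum>j<k. cscale_mat (of_real (c j)) (ket_bra (e j))) *v e i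
      = (\<Sum>j<k. (of_real (c j) * \<langle>e j, e i\<rangle>) *s e j)"
    by (simp add: matrix_vector_mult_sum_left cscale_mat_mult_vec ket_bra_eq_outer_prod
        outer_prod_mult_vec vector_smult_assoc)
  also have "\<dots> = (\<Sum>j<k. if j = i then c i *\<^sub>R e i else 0)"
    using orthonormal_familyD[OF e _ \<open>i < k\<close>]
    by (intro sum.cong) (auto simp: scaleR_eq_of_real_scale)
  also have "\<dots> = c i *\<^sub>R e i"
    using \<open>i < k\<close> by simp
  finally show ?thesis .
qed

lemma psd_mat_sum_ket_bra:
  assumes "\<And>j. j \<in> J \<Longrightarrow> 0 \<le> c j"
  shows "psd_mat (\<Sum>j\<in>J. cscale_mat (of_real (c j)) (ket_bra (v j)))"
proof -
  have "\<langle>x, (\<Sum>j\<in>J. cscale_mat (of_real (c j)) (ket_bra (v j))) *v x\<rangle>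
      = of_real (\<Sum>j\<in>J. c j * cmod \<langle>v j, x\<rangle> ^ 2)" for x
    by (simp add: matrix_vector_mult_sum_left cscale_mat_mult_vec ket_bra_eq_outer_prod
        outer_prod_mult_vec cinner_vec_linear cinner_vec_commute[of x] mult.assoc
        complex_mult_cnj_eq_cmod_sq)
  moreover have "0 \<le> (\<Sum>j\<in>J. c j * cmod \<langle>v j, x\<rangle> ^ 2)" for x
    using assms by (intro sum_nonneg) auto
  ultimately show ?thesis
    by (simp add: psd_mat_def)
qed

lemma psd_sqrt_eigenvector:
  assumes B: "psd_mat B" "B ** B = A" and eig: "A *v v = lam *\<^sub>R v" and "0 \<le> lam"
  shows "B *v v = sqrt lam *\<^sub>R v"
proof (cases "lam = 0")
  case True
  have "\<langle>B *v v, B *v v\<rangle> = \<langle>v, A *v v\<rangle>"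
    using hermitian_mat_cinner_vec[OF psd_mat_imp_hermitian_mat[OF B(1)], of v "B *v v"] B(2)
    by (simp add: matrix_vector_mul_assoc)
  with True eig show ?thesis
    by simp
next
  case False
  define s where "s = sqrt lam"
  have "s > 0"
    using False \<open>0 \<le> lam\<close> by (simp add: s_def)
  define y where "y = B *v v - s *\<^sub>R v"
  have "B *v y + s *\<^sub>R y = A *v v - (s * s) *\<^sub>R v"
    by (simp add: y_def B(2)[symmetric] matrix_vector_mul_assoc matrix_vector_mult_diff_distrib
        matrix_vector_mult_scaleR_complex algebra_simps)
  also have "\<dots> = 0"
    using eig \<open>0 \<le> lam\<close> by (simp add: s_def)
  finally have "B *v y = - (s *\<^sub>R y)"
    by (simp add: eq_neg_iff_add_eq_0)
  then have "Re \<langle>y, B *v y\<rangle> = - s * norm y ^ 2"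
    by (simp add: cinner_vec_linear cinner_vec_self)
  with psd_mat_Re_nonneg[OF B(1), of y] \<open>s > 0\<close> have "y = 0"
    by (simp add: mult_le_0_iff)
  then show ?thesis
    by (simp add: y_def s_def)
qed

lemma psd_sqrt_eq_sum:
  fixes A :: "complex^'n^'n"
  assumes e: "orthonormal_basis e"
    and eig: "\<And>j. j < CARD('n) \<Longrightarrow> A *v e j = lam j *\<^sub>R e j"
    and lam: "\<And>j. 0 \<le> lam j"
  shows "psd_sqrt A = (\<Sum>j<CARD('n). cscale_mat (of_real (sqrt (lam j))) (ket_bra (e j)))"
    (is "_ = ?S")
  unfolding psd_sqrt_def
proof (rule the_equality)
  have S_eig: "?S *v e j = sqrt (lam j) *\<^sub>R e j" if "j < CARD('n)" for j
    using sum_ket_bra_mult_basis[OF e that] .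
  have "?S ** ?S = A"
    using lam by (intro orthonormal_basis_matrix_eqI[OF e])
      (simp add: S_eig eig matrix_vector_mul_assoc[symmetric] matrix_vector_mult_scaleR_complex)
  then show "psd_mat ?S \<and> ?S ** ?S = A"
    using lam by (simp add: psd_mat_sum_ket_bra)
  show "B = ?S" if "psd_mat B \<and> B ** B = A" for B
    using that psd_sqrt_eigenvector[of B A, OF _ _ eig lam] S_eig
    by (intro orthonormal_basis_matrix_eqI[OF e]) auto
qed

lemma trace_norm_eq_sum_sqrt_eigenvalues:
  fixes X :: "complex^'n^'n"
  assumes e: "orthonormal_basis e"
    and eig: "\<And>j. j < CARD('n) \<Longrightarrow> (adj_mat X ** X) *v e j = lam j *\<^sub>R e j"
    and lam: "\<And>j. 0 \<le> lam j"
  shows "trace_norm X = (\<Sum>j<CARD('n). sqrt (lam j))"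
proof -
  have "trace_norm X = Re (\<Sum>j<CARD('n). of_real (sqrt (lam j)) * trace (ket_bra (e j)))"
    by (simp add: trace_norm_def psd_sqrt_eq_sum[OF e eig lam] trace_sum trace_cscale_mat)
  also have "\<dots> = (\<Sum>j<CARD('n). sqrt (lam j))"
    using orthonormal_familyD[OF e] by (simp add: ket_bra_eq_outer_prod trace_outer_prod Re_sum)
  finally show ?thesis .
qed

lemma cinner_vec_mult_adj_mult_eigenvectors:
  fixes X :: "complex^'n^'n"
  assumes e: "orthonormal_basis e"
    and eig: "\<And>j. j < CARD('n) \<Longrightarrow> (adj_mat X ** X) *v e j = lam j *\<^sub>R e j"
    and "i < CARD('n)" "j < CARD('n)"
  shows "\<langle>X *v e i, X *v e j\<rangle> = (if i = j then of_real (lam j) else 0)"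
proof -
  have "\<langle>X *v e i, X *v e j\<rangle> = \<langle>e i, (adj_mat X ** X) *v e j\<rangle>"
    by (simp add: cinner_vec_adj_mat matrix_vector_mul_assoc[symmetric])
  then show ?thesis
    using assms(3,4) orthonormal_familyD[OF e assms(3,4)] by (simp add: eig cinner_vec_scaleR_right)
qed

lemma singular_value_decomposition:
  fixes X :: "complex^'n^'n"
  obtains e \<sigma> f where "orthonormal_basis e" "orthonormal_or_zero CARD('n) f" "\<And>j. 0 \<le> \<sigma> j"
    "trace_norm X = (\<Sum>j<CARD('n). \<sigma> j)"
    "\<And>j. j < CARD('n) \<Longrightarrow> X *v e j = \<sigma> j *\<^sub>R f j"
    "\<And>j. j < CARD('n) \<Longrightarrow> \<langle>f j, X *v e j\<rangle> = of_real (\<sigma> j)"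
proof -
  let ?N = "CARD('n)"
  obtain e lam where e: "orthonormal_basis e" and lam: "\<And>j. 0 \<le> lam j"
    and eig: "\<And>j. j < ?N \<Longrightarrow> (adj_mat X ** X) *v e j = lam j *\<^sub>R e j"
    using psd_spectral_theorem[OF psd_mat_adj_mult[of X]] by blast
  define \<sigma> where "\<sigma> j = sqrt (lam j)" for j
  define f where "f j = (if \<sigma> j > 0 then (1 / \<sigma> j) *\<^sub>R (X *v e j) else 0)" for j
  have \<sigma>_nonneg: "0 \<le> \<sigma> j" for j
    using lam by (simp add: \<sigma>_def)
  have XX: "\<langle>X *v e i, X *v e j\<rangle> = (if i = j then of_real (\<sigma> j ^ 2) else 0)"
    if "i < ?N" "j < ?N" for i j
    using cinner_vec_mult_adj_mult_eigenvectors[OF e eig that] lam by (simp add: \<sigma>_def)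
  have Xe: "X *v e j = \<sigma> j *\<^sub>R f j" if "j < ?N" for j
    using XX[OF that that] \<sigma>_nonneg[of j] by (auto simp: f_def)
  have f_unit: "\<langle>f j, f j\<rangle> = 1" if "j < ?N" "\<sigma> j > 0" for j
    using XX[OF that(1) that(1)] that(2)
    by (simp add: f_def cinner_vec_scaleR_left cinner_vec_scaleR_right power2_eq_square)
  have "orthonormal_or_zero ?N f"
    using XX f_unit by (auto simp: orthonormal_or_zero_def f_def cinner_vec_linear
        cinner_vec_self_eq_1_iff[symmetric])
  moreover have "\<langle>f j, X *v e j\<rangle> = of_real (\<sigma> j)" if "j < ?N" for j
  proof -
    have "\<langle>f j, X *v e j\<rangle> = of_real (\<sigma> j) * \<langle>f j, f j\<rangle>"
      by (simp add: Xe[OF that] cinner_vec_scaleR_right)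
    then show ?thesis
      using f_unit[OF that] \<sigma>_nonneg[of j] by (cases "\<sigma> j > 0") auto
  qed
  moreover have "trace_norm X = (\<Sum>j<?N. \<sigma> j)"
    unfolding \<sigma>_def by (rule trace_norm_eq_sum_sqrt_eigenvalues[OF e eig lam])
  ultimately show ?thesis
    using that e \<sigma>_nonneg Xe by blast
qed

definition trace_pairing :: "(nat \<Rightarrow> complex^'n) \<Rightarrow> (nat \<Rightarrow> complex^'n) \<Rightarrow> complex^'n^'n \<Rightarrow> complex" where
  "trace_pairing f e Y = (\<Sum>k<CARD('n). \<langle>f k, Y *v e k\<rangle>)"

lemma trace_norm_eq_Re_trace_pairing:
  fixes X :: "complex^'n^'n"
  obtains e f where "orthonormal_basis e" "orthonormal_or_zero CARD('n) f"
    "trace_norm X = Re (trace_pairing f e X)"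
proof -
  obtain e \<sigma> f where "orthonormal_basis e" "orthonormal_or_zero CARD('n) f"
    "trace_norm X = (\<Sum>j<CARD('n). \<sigma> j)"
    "\<And>j. j < CARD('n) \<Longrightarrow> \<langle>f j, X *v e j\<rangle> = of_real (\<sigma> j)"
    using singular_value_decomposition by metis
  then show ?thesis
    using that by (simp add: trace_pairing_def Re_sum)
qed

lemma trace_norm_zero [simp]: "trace_norm (0::complex^'n^'n) = 0"
proof -
  obtain e \<sigma> f where "trace_norm (0::complex^'n^'n) = (\<Sum>j<CARD('n). \<sigma> j)"
    "\<And>j. j < CARD('n) \<Longrightarrow> \<langle>f j, (0::complex^'n^'n) *v e j\<rangle> = of_real (\<sigma> j)"
    using singular_value_decomposition by metis
  then show ?thesis
    by simp
qed

section \<open>Bounds on pure states\<close>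

lemma trace_pairing_add: "trace_pairing f e (A + B) = trace_pairing f e A + trace_pairing f e B"
  and trace_pairing_diff: "trace_pairing f e (A - B) = trace_pairing f e A - trace_pairing f e B"
  and trace_pairing_cscale_mat: "trace_pairing f e (cscale_mat c A) = c * trace_pairing f e A"
  by (simp_all add: trace_pairing_def matrix_vector_mult_add_rdistrib
      matrix_vector_mult_diff_rdistrib cscale_mat_mult_vec cinner_vec_linear sum.distrib
      sum_subtractf sum_distrib_left)

lemma trace_pairing_zero [simp]: "trace_pairing f e 0 = 0"
  by (simp add: trace_pairing_def)

lemma trace_pairing_sum: "trace_pairing f e (\<Sum>l\<in>L. A l) = (\<Sum>l\<in>L. trace_pairing f e (A l))"
  by (induct L rule: infinite_finite_induct) (simp_all add: trace_pairing_add)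

lemma trace_pairing_outer_prod:
  "trace_pairing f e (outer_prod x y) = (\<Sum>k<CARD('n). \<langle>f k, x\<rangle> * \<langle>y, e k\<rangle>)"
  for e :: "nat \<Rightarrow> complex^'n"
  by (simp add: trace_pairing_def outer_prod_mult_vec cinner_vec_scale_right mult.commute)

lemma trace_pairing_outer_prod_bound:
  fixes e f :: "nat \<Rightarrow> complex^'n"
  assumes e: "orthonormal_basis e" and f: "orthonormal_or_zero CARD('n) f"
  shows "cmod (trace_pairing f e (outer_prod x y)) \<le> norm x * norm y"
proof -
  let ?N = "CARD('n)"
  have "cmod (trace_pairing f e (outer_prod x y))
      \<le> (\<Sum>k<?N. \<bar>cmod \<langle>f k, x\<rangle>\<bar> * \<bar>cmod \<langle>e k, y\<rangle>\<bar>)"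
    unfolding trace_pairing_outer_prod
    by (rule order.trans[OF norm_sum]) (simp add: norm_mult cinner_vec_commute[of y])
  also have "\<dots> \<le> L2_set (\<lambda>k. cmod \<langle>f k, x\<rangle>) {..<?N} * L2_set (\<lambda>k. cmod \<langle>e k, y\<rangle>) {..<?N}"
    by (rule L2_set_mult_ineq)
  also have "\<dots> \<le> norm x * norm y"
  proof (rule mult_mono)
    show "L2_set (\<lambda>k. cmod \<langle>f k, x\<rangle>) {..<?N} \<le> norm x"
      using bessel_inequality[OF f, of x] by (simp add: L2_set_def real_le_lsqrt)
    show "L2_set (\<lambda>k. cmod \<langle>e k, y\<rangle>) {..<?N} \<le> norm y"
      using orthonormal_basis_parseval[OF e, of y] by (simp add: L2_set_def real_le_lsqrt)
  qed (simp_all add: L2_set_nonneg)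
  finally show ?thesis .
qed

text \<open>After a phase change making \<open>\<langle>g, p\<rangle>\<close> real and nonnegative, the difference of the two
  projections factors through \<open>g - p\<close> and \<open>g + p\<close>, whose lengths multiply to
  \<open>2 * sqrt (1 - \<bar>\<langle>g, p\<rangle>\<bar>^2)\<close>.\<close>
lemma trace_pairing_ket_bra_diff_bound:
  fixes e f :: "nat \<Rightarrow> complex^'n"
  assumes e: "orthonormal_basis e" and f: "orthonormal_or_zero CARD('n) f"
    and g: "norm g = 1" and p: "norm p = 1"
  shows "cmod (trace_pairing f e (ket_bra g - ket_bra p)) \<le> 2 * sqrt (1 - cmod \<langle>g, p\<rangle> ^ 2)"
proof -
  obtain c where c: "cmod c = 1" "cnj c * \<langle>g, p\<rangle> = of_real (cmod \<langle>g, p\<rangle>)"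
    using unimodular_phase .
  define t where "t = cmod \<langle>g, p\<rangle>"
  define g' where "g' = c *s g"
  have "norm g' = 1" and "inner g' p = t"
    using c g by (simp_all add: g'_def t_def norm_scale_vec inner_vec_eq_Re_cinner_vec
        cinner_vec_scale_left)
  then have norm_diff: "norm (g' - p) ^ 2 = 2 - 2 * t" and norm_add: "norm (g' + p) ^ 2 = 2 + 2 * t"
    using p dot_norm[of g' p] dot_norm_neg[of g' p] by simp_all
  have "norm (g' - p) * norm (g' + p) = sqrt ((2 - 2 * t) * (2 + 2 * t))"
    by (simp add: real_sqrt_mult flip: norm_diff norm_add)
  also have "\<dots> = sqrt (2^2 * (1 - t ^ 2))"
    by (rule arg_cong[where f = sqrt]) (simp add: algebra_simps power2_eq_square)
  also have "\<dots> = 2 * sqrt (1 - t ^ 2)"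
    by (subst real_sqrt_mult) simp
  finally have norms: "norm (g' - p) * norm (g' + p) = 2 * sqrt (1 - t ^ 2)" .
  have "ket_bra g - ket_bra p
      = cscale_mat (1/2) (outer_prod (g' - p) (g' + p) + outer_prod (g' + p) (g' - p))"
    by (simp add: g'_def ket_bra_unimodular_scale[OF c(1)] flip: ket_bra_diff_eq_outer_prod)
  then have "cmod (trace_pairing f e (ket_bra g - ket_bra p))
      \<le> (cmod (trace_pairing f e (outer_prod (g' - p) (g' + p)))
         + cmod (trace_pairing f e (outer_prod (g' + p) (g' - p)))) / 2"
    by (simp add: trace_pairing_add trace_pairing_cscale_mat norm_mult norm_triangle_ineq)
  also have "\<dots> \<le> (norm (g' - p) * norm (g' + p) + norm (g' + p) * norm (g' - p)) / 2"
    by (intro divide_right_mono add_mono trace_pairing_outer_prod_bound[OF e f]) auto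
  finally show ?thesis
    using norms by (simp add: t_def mult.commute)
qed

lemma sum_mult_sqrt_le_sqrt_sum:
  fixes mu a :: "'a \<Rightarrow> real"
  assumes "\<And>l. l \<in> I \<Longrightarrow> 0 \<le> mu l" "\<And>l. l \<in> I \<Longrightarrow> 0 \<le> a l" "(\<Sum>l\<in>I. mu l) = 1"
  shows "(\<Sum>l\<in>I. mu l * sqrt (a l)) \<le> sqrt (\<Sum>l\<in>I. mu l * a l)"
proof -
  have "(\<Sum>l\<in>I. mu l * sqrt (a l)) = (\<Sum>l\<in>I. \<bar>sqrt (mu l)\<bar> * \<bar>sqrt (mu l * a l)\<bar>)"
    using assms(1,2) by (intro sum.cong refl) (simp add: real_sqrt_mult mult.assoc[symmetric])
  also have "\<dots> \<le> L2_set (\<lambda>l. sqrt (mu l)) I * L2_set (\<lambda>l. sqrt (mu l * a l)) I"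
    by (rule L2_set_mult_ineq)
  also have "\<dots> = sqrt (\<Sum>l\<in>I. mu l * a l)"
    using assms by (simp add: L2_set_def)
  finally show ?thesis .
qed

lemma density_spectral_decomposition:
  fixes \<rho> :: "complex^'n^'n"
  assumes "psd_mat \<rho>" "trace \<rho> = 1"
  obtains g mu where "orthonormal_basis g" "\<And>l. 0 \<le> mu l" "(\<Sum>l<CARD('n). mu l) = 1"
    "\<rho> = (\<Sum>l<CARD('n). cscale_mat (of_real (mu l)) (ket_bra (g l)))"
proof -
  obtain g mu where g: "orthonormal_basis g" and mu: "\<And>l. 0 \<le> mu l"
    and eig: "\<And>l. l < CARD('n) \<Longrightarrow> \<rho> *v g l = mu l *\<^sub>R g l"
    using psd_spectral_theorem[OF assms(1)] by blast
  have decomp: "\<rho> = (\<Sum>l<CARD('n). cscale_mat (of_real (mu l)) (ket_bra (g l)))"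
    using eig sum_ket_bra_mult_basis[OF g] by (intro orthonormal_basis_matrix_eqI[OF g]) simp
  have "trace \<rho> = of_real (\<Sum>l<CARD('n). mu l)"
    using orthonormal_family_norm[OF g]
    by (subst decomp) (simp add: trace_sum trace_cscale_mat ket_bra_eq_outer_prod
        trace_outer_prod cinner_vec_self)
  with assms(2) have "(\<Sum>l<CARD('n). mu l) = 1"
    by (metis of_real_eq_1_iff)
  with g mu decomp show ?thesis
    using that by blast
qed

lemma Re_cinner_vec_sum_ket_bra:
  "Re \<langle>p, (\<Sum>l\<in>L. cscale_mat (of_real (mu l)) (ket_bra (g l))) *v p\<rangle>
     = (\<Sum>l\<in>L. mu l * cmod \<langle>g l, p\<rangle> ^ 2)"
  by (simp add: matrix_vector_mult_sum_left cscale_mat_mult_vec ket_bra_eq_outer_prod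
      outer_prod_mult_vec cinner_vec_linear cinner_vec_commute[of p] mult.assoc
      complex_mult_cnj_eq_cmod_sq Re_sum)

lemma density_fidelity_le_one:
  fixes \<rho> :: "complex^'n^'n"
  assumes "psd_mat \<rho>" "trace \<rho> = 1" "norm p = 1"
  shows "Re \<langle>p, \<rho> *v p\<rangle> \<le> 1"
proof -
  obtain g mu where g: "orthonormal_basis g" and mu: "\<And>l. 0 \<le> mu l"
    and sum_mu: "(\<Sum>l<CARD('n). mu l) = 1"
    and decomp: "\<rho> = (\<Sum>l<CARD('n). cscale_mat (of_real (mu l)) (ket_bra (g l)))"
    using density_spectral_decomposition[OF assms(1,2)] by blast
  have "Re \<langle>p, \<rho> *v p\<rangle> = (\<Sum>l<CARD('n). mu l * cmod \<langle>g l, p\<rangle> ^ 2)"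
    by (simp add: decomp Re_cinner_vec_sum_ket_bra)
  also have "\<dots> \<le> (\<Sum>l<CARD('n). mu l * 1)"
  proof (intro sum_mono mult_left_mono)
    fix l assume "l \<in> {..<CARD('n)}"
    then show "cmod \<langle>g l, p\<rangle> ^ 2 \<le> 1"
      using cmod_cinner_vec_le[of "g l" p] orthonormal_family_norm[OF g] assms(3)
      by (simp add: power_le_one)
  qed (rule mu)
  finally show ?thesis
    by (simp add: sum_mu)
qed

text \<open>The dual form of the Fuchs--van de Graaf inequality.\<close>
lemma trace_pairing_density_minus_pure_bound:
  fixes \<rho> :: "complex^'n^'n" and e f :: "nat \<Rightarrow> complex^'n"
  assumes e: "orthonormal_basis e" and f: "orthonormal_or_zero CARD('n) f"
    and \<rho>: "psd_mat \<rho>" "trace \<rho> = 1" and p: "norm p = 1"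
  shows "cmod (trace_pairing f e (\<rho> - ket_bra p)) \<le> 2 * sqrt (1 - Re \<langle>p, \<rho> *v p\<rangle>)"
proof -
  let ?N = "CARD('n)"
  obtain g mu where g: "orthonormal_basis g" and mu: "\<And>l. 0 \<le> mu l"
    and sum_mu: "(\<Sum>l<?N. mu l) = 1"
    and decomp: "\<rho> = (\<Sum>l<?N. cscale_mat (of_real (mu l)) (ket_bra (g l)))"
    using density_spectral_decomposition[OF \<rho>] by blast
  define a where "a l = 1 - cmod \<langle>g l, p\<rangle> ^ 2" for l
  have a_nonneg: "0 \<le> a l" if "l < ?N" for l
    using cmod_cinner_vec_le[of "g l" p] orthonormal_family_norm[OF g that] p
    by (simp add: a_def power_le_one)
  have "1 - Re \<langle>p, \<rho> *v p\<rangle> = (\<Sum>l<?N. mu l * a l)"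
    by (simp add: decomp Re_cinner_vec_sum_ket_bra a_def sum_mu algebra_simps sum_subtractf
        flip: sum_distrib_left)
  have "trace_pairing f e (\<rho> - ket_bra p)
      = (\<Sum>l<?N. of_real (mu l) * trace_pairing f e (ket_bra (g l) - ket_bra p))"
  proof -
    have "(\<Sum>l<?N. of_real (mu l) :: complex) = 1"
      by (simp flip: of_real_sum add: sum_mu)
    then have "\<rho> - ket_bra p = (\<Sum>l<?N. cscale_mat (of_real (mu l)) (ket_bra (g l) - ket_bra p))"
      by (simp add: decomp vec_eq_iff cscale_mat_def sum_subtractf right_diff_distrib
          flip: sum_distrib_right)
    then show ?thesis
      by (simp add: trace_pairing_sum trace_pairing_cscale_mat)
  qed
  also have "cmod \<dots> \<le> (\<Sum>l<?N. mu l * (2 * sqrt (a l)))"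
    using mu trace_pairing_ket_bra_diff_bound[OF e f orthonormal_family_norm[OF g] p]
    by (intro order.trans[OF norm_sum] sum_mono) (simp add: norm_mult a_def mult_left_mono)
  also have "\<dots> = 2 * (\<Sum>l<?N. mu l * sqrt (a l))"
    by (simp add: sum_distrib_left mult_ac)
  also have "\<dots> \<le> 2 * sqrt (\<Sum>l<?N. mu l * a l)"
    using sum_mult_sqrt_le_sqrt_sum[of "{..<?N}" mu a, OF mu _ sum_mu] a_nonneg by simp
  finally show ?thesis
    using \<open>1 - Re \<langle>p, \<rho> *v p\<rangle> = (\<Sum>l<?N. mu l * a l)\<close> by simp
qed

section \<open>Polarization and channels\<close>

lemma parallelogram_law:
  fixes x y :: "'a::real_inner"
  shows "norm (x + y) ^ 2 + norm (x - y) ^ 2 = 2 * (norm x ^ 2 + norm y ^ 2)"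
  using dot_norm[of x y] dot_norm_neg[of x y] by simp

lemma sum_norm_polarization_vectors:
  "(\<Sum>m<4. norm (b + \<i>^m *s a) ^ 2) = 4 * (norm a ^ 2 + norm (b::complex^'n) ^ 2)"
proof -
  have "{..<4::nat} = {0, 1, 2, 3}"
    by auto
  then have "(\<Sum>m<4. norm (b + \<i>^m *s a) ^ 2)
      = (norm (b + a) ^ 2 + norm (b - a) ^ 2) + (norm (b + \<i> *s a) ^ 2 + norm (b - \<i> *s a) ^ 2)"
    by (simp add: power3_eq_cube power2_eq_square vector_smult_lneg flip: vector_smult_assoc)
  also have "\<dots> = 4 * (norm a ^ 2 + norm b ^ 2)"
    by (simp add: parallelogram_law norm_scale_vec)
  finally show ?thesis .
qed

lemma functional_ket_bra_bound:
  fixes L :: "complex^'n^'n \<Rightarrow> complex"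
  assumes scale: "\<And>c A. L (cscale_mat c A) = c * L A"
    and unit: "\<And>p. norm p = 1 \<Longrightarrow> cmod (L (ket_bra p)) \<le> C" and "0 \<le> C"
  shows "cmod (L (ket_bra w)) \<le> C * norm w ^ 2"
proof (cases "w = 0")
  case True
  then have "ket_bra w = cscale_mat 0 (ket_bra w)"
    by (simp add: ket_bra_def cscale_mat_def vec_eq_iff)
  then show ?thesis
    using True \<open>0 \<le> C\<close> by (metis scale mult_zero_left norm_zero order_refl mult_nonneg_nonneg
        zero_le_power2)
next
  case False
  define p where "p = (1 / norm w) *\<^sub>R w"
  have "norm p = 1" and "w = norm w *\<^sub>R p"
    using False by (simp_all add: p_def)
  then have "L (ket_bra w) = of_real (norm w ^ 2) * L (ket_bra p)"
    by (metis ket_bra_scaleR scale)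
  then show ?thesis
    using mult_left_mono[OF unit[OF \<open>norm p = 1\<close>], of "norm w ^ 2"]
    by (simp add: norm_mult norm_power mult.commute)
qed

lemma functional_outer_prod_bound:
  fixes L :: "complex^'n^'n \<Rightarrow> complex"
  assumes add: "\<And>A B. L (A + B) = L A + L B"
    and scale: "\<And>c A. L (cscale_mat c A) = c * L A"
    and unit: "\<And>p. norm p = 1 \<Longrightarrow> cmod (L (ket_bra p)) \<le> C" and "0 \<le> C"
  shows "cmod (L (outer_prod b a)) \<le> C * (norm a ^ 2 + norm b ^ 2)"
proof -
  have L_sum: "L (\<Sum>m\<in>M. A m) = (\<Sum>m\<in>M. L (A m))" for M A
    using add[of 0 0] by (induct M rule: infinite_finite_induct) (simp_all add: add)
  have "cmod (L (outer_prod b a)) \<le> (\<Sum>m<4. cmod (L (ket_bra (b + \<i>^m *s a))) / 4)"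
    unfolding outer_prod_polarization L_sum scale
    by (rule order.trans[OF norm_sum]) (simp add: norm_mult norm_divide norm_power)
  also have "\<dots> \<le> (\<Sum>m<4. C * norm (b + \<i>^m *s a) ^ 2 / 4)"
    using functional_ket_bra_bound[OF scale unit \<open>0 \<le> C\<close>]
    by (intro sum_mono divide_right_mono) simp_all
  also have "\<dots> = C * (norm a ^ 2 + norm b ^ 2)"
    by (simp add: sum_divide_distrib[symmetric] sum_distrib_left[symmetric]
        sum_norm_polarization_vectors)
  finally show ?thesis .
qed

lemma functional_trace_norm_bound:
  fixes L :: "complex^'n^'n \<Rightarrow> complex"
  assumes add: "\<And>A B. L (A + B) = L A + L B"
    and scale: "\<And>c A. L (cscale_mat c A) = c * L A"
    and unit: "\<And>p. norm p = 1 \<Longrightarrow> cmod (L (ket_bra p)) \<le> C" and "0 \<le> C"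
  shows "cmod (L X) \<le> 2 * C * trace_norm X"
proof -
  let ?N = "CARD('n)"
  obtain e \<sigma> f where e: "orthonormal_basis e" and f: "orthonormal_or_zero ?N f"
    and \<sigma>: "\<And>j. 0 \<le> \<sigma> j" and trace_norm_X: "trace_norm X = (\<Sum>j<?N. \<sigma> j)"
    and Xe: "\<And>j. j < ?N \<Longrightarrow> X *v e j = \<sigma> j *\<^sub>R f j"
    using singular_value_decomposition by metis
  have L_sum: "L (\<Sum>j\<in>J. A j) = (\<Sum>j\<in>J. L (A j))" for J A
    using add[of 0 0] by (induct J rule: infinite_finite_induct) (simp_all add: add)
  have "X = (\<Sum>j<?N. outer_prod (X *v e j) (e j))"
    by (rule matrix_eq_sum_outer_prod[OF e])
  also have "\<dots> = (\<Sum>j<?N. cscale_mat (of_real (\<sigma> j)) (outer_prod (f j) (e j)))"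
    by (intro sum.cong refl) (simp add: Xe outer_prod_scaleR_left)
  finally have "cmod (L X) \<le> (\<Sum>j<?N. \<sigma> j * cmod (L (outer_prod (f j) (e j))))"
    using \<sigma> by (simp add: L_sum scale order.trans[OF norm_sum] norm_mult)
  also have "\<dots> \<le> (\<Sum>j<?N. \<sigma> j * (2 * C))"
  proof (intro sum_mono mult_left_mono)
    fix j assume "j \<in> {..<?N}"
    then have "norm (e j) ^ 2 + norm (f j) ^ 2 \<le> 2"
      using orthonormal_family_norm[OF e] f by (auto simp: orthonormal_or_zero_def)
    then have "C * (norm (e j) ^ 2 + norm (f j) ^ 2) \<le> 2 * C"
      using \<open>0 \<le> C\<close> by (simp add: mult_left_mono mult.commute)
    then show "cmod (L (outer_prod (f j) (e j))) \<le> 2 * C"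
      using functional_outer_prod_bound[OF add scale unit \<open>0 \<le> C\<close>, of "f j" "e j"] by simp
  qed (rule \<sigma>)
  finally show ?thesis
    by (simp add: trace_norm_X sum_distrib_left sum_distrib_right mult_ac)
qed

lemma channel_add: "channel T \<Longrightarrow> T (A + B) = T A + T B"
  and channel_cscale_mat: "channel T \<Longrightarrow> T (cscale_mat c A) = cscale_mat c (T A)"
  and channel_psd_mat: "channel T \<Longrightarrow> psd_mat A \<Longrightarrow> psd_mat (T A)"
  and channel_trace: "channel T \<Longrightarrow> trace (T A) = trace A"
  by (simp_all add: channel_def clinear_map_def completely_positive_psd_mat)

lemma channel_pure_output_density:
  assumes "channel T" "norm p = 1"
  shows "psd_mat (T (ket_bra p))" "trace (T (ket_bra p)) = 1"
  using assms channel_psd_mat[OF _ psd_mat_ket_bra]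
  by (simp_all add: channel_trace ket_bra_eq_outer_prod trace_outer_prod cinner_vec_self)

lemma channel_trace_norm_diff_le:
  fixes T :: "complex^'n^'n \<Rightarrow> complex^'n^'n"
  assumes T: "channel T" and "0 \<le> R"
    and R: "\<And>\<psi>. norm \<psi> = 1 \<Longrightarrow> sqrt (1 - Re \<langle>\<psi>, T (ket_bra \<psi>) *v \<psi>\<rangle>) \<le> R"
  shows "trace_norm (T \<rho> - \<rho>) \<le> 4 * R * trace_norm \<rho>"
proof -
  obtain e f where e: "orthonormal_basis e" and f: "orthonormal_or_zero CARD('n) f"
    and witness: "trace_norm (T \<rho> - \<rho>) = Re (trace_pairing f e (T \<rho> - \<rho>))"
    using trace_norm_eq_Re_trace_pairing by blast
  define L where "L Y = trace_pairing f e (T Y - Y)" for Y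
  have add: "L (A + B) = L A + L B" for A B
    by (simp add: L_def channel_add[OF T] trace_pairing_add trace_pairing_diff)
  have scale: "L (cscale_mat c A) = c * L A" for c A
    by (simp add: L_def channel_cscale_mat[OF T] trace_pairing_diff trace_pairing_cscale_mat
        algebra_simps)
  have unit: "cmod (L (ket_bra p)) \<le> 2 * R" if "norm p = 1" for p
    using trace_pairing_density_minus_pure_bound[OF e f channel_pure_output_density[OF T that] that]
      R[OF that] by (simp add: L_def)
  have "0 \<le> 2 * R"
    using \<open>0 \<le> R\<close> by simp
  have "trace_norm (T \<rho> - \<rho>) \<le> cmod (L \<rho>)"
    by (simp add: witness L_def complex_Re_le_cmod)
  also have "\<dots> \<le> 2 * (2 * R) * trace_norm \<rho>"
    by (rule functional_trace_norm_bound[OF add scale unit \<open>0 \<le> 2 * R\<close>])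
  finally show ?thesis
    by simp
qed

lemma exists_unit_vector: "\<exists>\<psi>::complex^'n. norm \<psi> = 1"
  by (metis norm_sgn sgn_zero_iff axis_eq_0_iff zero_neq_one)

theorem lemma2:
  fixes T :: "complex^'n^'n \<Rightarrow> complex^'n^'n"
  assumes "channel T"
  shows "superop_norm (\<lambda>\<rho>. T \<rho> - \<rho>)
    \<le> 4 * Sup {sqrt (1 - Re (cinner_vec \<psi> (T (ket_bra \<psi>) *v \<psi>))) | \<psi>. norm \<psi> = 1}"
proof -
  define Q where "Q = {sqrt (1 - Re \<langle>\<psi>, T (ket_bra \<psi>) *v \<psi>\<rangle>) | \<psi>. norm \<psi> = 1}"
  have fidelity: "0 \<le> Re \<langle>\<psi>, T (ket_bra \<psi>) *v \<psi>\<rangle>" "Re \<langle>\<psi>, T (ket_bra \<psi>) *v \<psi>\<rangle> \<le> 1"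
    if "norm \<psi> = 1" for \<psi>
    using channel_pure_output_density[OF assms that] psd_mat_Re_nonneg density_fidelity_le_one that
    by blast+
  then have "bdd_above Q"
    by (auto simp: Q_def intro!: bdd_aboveI[of _ 1])
  then have Sup_upper: "sqrt (1 - Re \<langle>\<psi>, T (ket_bra \<psi>) *v \<psi>\<rangle>) \<le> Sup Q" if "norm \<psi> = 1" for \<psi>
    using that by (auto simp: Q_def intro!: cSup_upper)
  have "0 \<le> Sup Q"
    using exists_unit_vector Sup_upper fidelity(2) by (meson diff_ge_0_iff_ge order.trans real_sqrt_ge_zero)
  then have "trace_norm (T \<rho> - \<rho>) \<le> 4 * Sup Q" if "trace_norm \<rho> \<le> 1" for \<rho>
    using order.trans[OF channel_trace_norm_diff_le[OF assms _ Sup_upper] mult_left_le[OF that]]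
    by simp
  then show ?thesis
    unfolding superop_norm_def Q_def[symmetric]
    by (intro cSup_least) (auto intro: exI[of _ 0])
qed

end
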